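(* Fix a classifier $f_\theta$, a sequence of queueing systems and a sequence of feasible policies, and suppose Assumptions (DGP), (HT) and (UI) hold. Then for every predicted class $l\in[K]$, as $n\to\infty$, \[ \tilde L_l^n\to\tilde L_l:=\tilde R_l\circ\lambda e+\sum_{k=1}^K\frac{p_k}{\mu_k}q_{kl}\tilde A_0,\qquad \tilde L_+^n\to\tilde L_+:=\tilde V_0\circ\lambda e+\sum_{k=1}^K\frac{p_k}{\mu_k}\tilde A_0, \] uniformly on $[0,1]$, where $e$ is the identity on $[0,1]$. Moreover, for every $n$ and $t\in[0,1]$, \[ \hat L_l^n(nt)=\lambda^n\sum_{k=1}^K\frac{p_k^n}{\mu_k^n}q_{kl}^n\,nt+n^{1/2}\tilde L_l^n(t)+o(n^{1/2}),\qquad \hat L_+^n(nt)=\lambda^n\sum_{k=1}^K\frac{p_k^n}{\mu_k^n}\,nt+n^{1/2}\tilde L_+^n(t)+o(n^{1/2}). \]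
   Context: Model. For each $n$, system $n$ operates on $[0,n]$; jobs $i=1,2,\dots$ arrive in a single stream with interarrival times $u_i^n$, features $X_i^n\in\mathbb R^d$, one-hot true class $Y_i^n\in\{0,1\}^K$, service requirement $v_i^n>0$, and one-hot predicted class $\hat Y_i^n=f_\theta(X_i^n)$. Let $\lambda^n=1/E[u_1^n]$, $p_k^n=P(Y_{1k}^n=1)$, $1/\mu_k^n=E[v_1^n\mid Y_{1k}^n=1]$, $q_{kl}^n=P(\hat Y_{1l}^n=1\mid Y_{1k}^n=1)$, $A_0^n(t)=\max\{m:\sum_{i\le m}u_i^n\le t\}$. Assumption (DGP): for each $n$, $\{(u_i^n,v_i^n,X_i^n,Y_i^n)\}_i$ i.i.d.; $\{u_i^n\}$ independent of $\{(v_i^n,X_i^n,Y_i^n)\}$; $v_i^n\perp X_i^n\mid Y_i^n$. Assumption (HT): there exist $p_k,q_{kl}\in[0,1]$, positive $\lambda,\mu_k$ with $\sum_kp_kq_{kl}>0$ for all $l$, $\lambda\sum_kp_k/\mu_k=1$, and $n^{1/2}(\lambda^n-\lambda),n^{1/2}(\mu_k^n-\mu_k),n^{1/2}(p_k^n-p_k),n^{1/2}(q_{kl}^n-q_{kl})\to0$. Assumption (UI): $E[(u_1^n)^2],E[(v_1^n)^2],E[(X_1^n)^2]<\infty$; $E[(u_1^n)^2\mathbf 1\{u_1^n>x\}]\le g_u(x)$, $E[(v_1^n)^2\mathbf 1\{v_1^n>x\}]\le g_v(x)$ with fixed $g_u,g_v\to0$; $E[(u_1^n)^2]\to\alpha_u\in(0,\infty)$,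 $E[(v_1^n)^2\mid Y_{1k}^n=1]\to\alpha_{v,k}\in(0,\infty)$. Primitive diffusion-scaled processes on $[0,1]$: $\tilde A_0^n(t)=n^{-1/2}[A_0^n(nt)-\lambda^nnt]$; $\tilde V_0^n(t)=n^{-1/2}[\sum_{i\le\lfloor nt\rfloor}v_i^n-\sum_k\frac{p_k^n}{\mu_k^n}nt]$; $\tilde R_l^n(t)=n^{-1/2}[\sum_{i\le\lfloor nt\rfloor}\hat Y_{il}^nv_i^n-\sum_k\frac{p_k^n}{\mu_k^n}q_{kl}^nnt]$. These are realized on a common probability space (distributions preserved) on which they converge uniformly on $[0,1]$ almost surely to limits $\tilde A_0,\tilde V_0,\tilde R_l$ (jointly a multidimensional Brownian motion); all statements hold almost surely there. Input processes: $\hat L_l^n(t)=\sum_{i=1}^{A_0^n(t)}\hat Y_{il}^nv_i^n$ (total service requested by jobs predicted as $l$ arriving by $t$), $\hat L_+^n=\sum_l\hat L_l^n$, $\tilde L_l^n(t)=n^{-1/2}[\hat L_l^n(nt)-\lambda^n\sum_k\frac{p_k^n}{\mu_k^n}q_{kl}^nnt]$, $\tilde L_+^n=\sum_l\tilde L_l^n$. A feasible policy is a non-anticipating rule choosing which predicted class to serve (preemption allowed). $o(n^{1/2})$ denotes terms whose sup over $t\in[0,1]$ divided by $n^{1/2}$ tends to $0$. *)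

theory Defs
  imports "HOL-Probability.Probability"
begin

text \<open>Jobs are indexed from 0 (Isabelle job i corresponds to paper job i+1).
Classes are the elements of a finite type 'k (so K = CARD('k)); the one-hot
vector Y_i corresponds to the label Y i, with Y_{ik} = 1 iff Y i = k.\<close>

definition lam_n :: "'a measure \<Rightarrow> (nat \<Rightarrow> nat \<Rightarrow> 'a \<Rightarrow> real) \<Rightarrow> nat \<Rightarrow> real" where
  "lam_n M u n = 1 / integral\<^sup>L M (u n 0)"

definition p_n :: "'a measure \<Rightarrow> (nat \<Rightarrow> nat \<Rightarrow> 'a \<Rightarrow> 'k) \<Rightarrow> nat \<Rightarrow> 'k \<Rightarrow> real" where
  "p_n M Y n k = measure M {\<omega> \<in> space M. Y n 0 \<omega> = k}"

text \<open>1/mu_k^n = E[v | Y = k] = E[v 1{Y=k}] / P(Y=k).\<close>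
definition mu_n :: "'a measure \<Rightarrow> (nat \<Rightarrow> nat \<Rightarrow> 'a \<Rightarrow> real) \<Rightarrow> (nat \<Rightarrow> nat \<Rightarrow> 'a \<Rightarrow> 'k)
    \<Rightarrow> nat \<Rightarrow> 'k \<Rightarrow> real" where
  "mu_n M v Y n k = p_n M Y n k /
      integral\<^sup>L M (\<lambda>\<omega>. v n 0 \<omega> * indicator {\<omega>. Y n 0 \<omega> = k} \<omega>)"

definition q_n :: "'a measure \<Rightarrow> ('x \<Rightarrow> 'k) \<Rightarrow> (nat \<Rightarrow> nat \<Rightarrow> 'a \<Rightarrow> 'x) \<Rightarrow> (nat \<Rightarrow> nat \<Rightarrow> 'a \<Rightarrow> 'k)
    \<Rightarrow> nat \<Rightarrow> 'k \<Rightarrow> 'k \<Rightarrow> real" where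
  "q_n M f X Y n k l =
     measure M {\<omega> \<in> space M. Y n 0 \<omega> = k \<and> f (X n 0 \<omega>) = l} / p_n M Y n k"

definition A0 :: "(nat \<Rightarrow> nat \<Rightarrow> 'a \<Rightarrow> real) \<Rightarrow> nat \<Rightarrow> real \<Rightarrow> 'a \<Rightarrow> nat" where
  "A0 u n s \<omega> = (GREATEST m. (\<Sum>i<m. u n i \<omega>) \<le> s)"

definition Atil :: "'a measure \<Rightarrow> (nat \<Rightarrow> nat \<Rightarrow> 'a \<Rightarrow> real) \<Rightarrow> nat \<Rightarrow> real \<Rightarrow> 'a \<Rightarrow> real" where
  "Atil M u n t \<omega> = (real (A0 u n (real n * t) \<omega>) - lam_n M u n * real n * t) / sqrt (real n)"

definition V0til :: "'a measure \<Rightarrow> (nat \<Rightarrow> nat \<Rightarrow> 'a \<Rightarrow> real) \<Rightarrow> (nat \<Rightarrow> nat \<Rightarrow> 'a \<Rightarrow> 'k::finite)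
    \<Rightarrow> nat \<Rightarrow> real \<Rightarrow> 'a \<Rightarrow> real" where
  "V0til M v Y n t \<omega> =
     ((\<Sum>i<nat \<lfloor>real n * t\<rfloor>. v n i \<omega>)
      - (\<Sum>k\<in>UNIV. p_n M Y n k / mu_n M v Y n k) * real n * t) / sqrt (real n)"

definition Rtil :: "'a measure \<Rightarrow> ('x \<Rightarrow> 'k::finite) \<Rightarrow> (nat \<Rightarrow> nat \<Rightarrow> 'a \<Rightarrow> real)
    \<Rightarrow> (nat \<Rightarrow> nat \<Rightarrow> 'a \<Rightarrow> 'x) \<Rightarrow> (nat \<Rightarrow> nat \<Rightarrow> 'a \<Rightarrow> 'k) \<Rightarrow> nat \<Rightarrow> 'k \<Rightarrow> real \<Rightarrow> 'a \<Rightarrow> real" where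
  "Rtil M f v X Y n l t \<omega> =
     ((\<Sum>i<nat \<lfloor>real n * t\<rfloor>. (if f (X n i \<omega>) = l then v n i \<omega> else 0))
      - (\<Sum>k\<in>UNIV. p_n M Y n k / mu_n M v Y n k * q_n M f X Y n k l) * real n * t)
     / sqrt (real n)"

definition Lhat :: "('x \<Rightarrow> 'k) \<Rightarrow> (nat \<Rightarrow> nat \<Rightarrow> 'a \<Rightarrow> real) \<Rightarrow> (nat \<Rightarrow> nat \<Rightarrow> 'a \<Rightarrow> real)
    \<Rightarrow> (nat \<Rightarrow> nat \<Rightarrow> 'a \<Rightarrow> 'x) \<Rightarrow> nat \<Rightarrow> 'k \<Rightarrow> real \<Rightarrow> 'a \<Rightarrow> real" where
  "Lhat f u v X n l s \<omega> = (\<Sum>i<A0 u n s \<omega>. (if f (X n i \<omega>) = l then v n i \<omega> else 0))"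

definition Lhat_plus :: "('x \<Rightarrow> 'k::finite) \<Rightarrow> (nat \<Rightarrow> nat \<Rightarrow> 'a \<Rightarrow> real) \<Rightarrow> (nat \<Rightarrow> nat \<Rightarrow> 'a \<Rightarrow> real)
    \<Rightarrow> (nat \<Rightarrow> nat \<Rightarrow> 'a \<Rightarrow> 'x) \<Rightarrow> nat \<Rightarrow> real \<Rightarrow> 'a \<Rightarrow> real" where
  "Lhat_plus f u v X n s \<omega> = (\<Sum>l\<in>UNIV. Lhat f u v X n l s \<omega>)"

definition Ltil :: "'a measure \<Rightarrow> ('x \<Rightarrow> 'k::finite) \<Rightarrow> (nat \<Rightarrow> nat \<Rightarrow> 'a \<Rightarrow> real) \<Rightarrow> (nat \<Rightarrow> nat \<Rightarrow> 'a \<Rightarrow> real)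
    \<Rightarrow> (nat \<Rightarrow> nat \<Rightarrow> 'a \<Rightarrow> 'x) \<Rightarrow> (nat \<Rightarrow> nat \<Rightarrow> 'a \<Rightarrow> 'k) \<Rightarrow> nat \<Rightarrow> 'k \<Rightarrow> real \<Rightarrow> 'a \<Rightarrow> real" where
  "Ltil M f u v X Y n l t \<omega> =
     (Lhat f u v X n l (real n * t) \<omega>
      - lam_n M u n * (\<Sum>k\<in>UNIV. p_n M Y n k / mu_n M v Y n k * q_n M f X Y n k l) * real n * t)
     / sqrt (real n)"

definition Ltil_plus :: "'a measure \<Rightarrow> ('x \<Rightarrow> 'k::finite) \<Rightarrow> (nat \<Rightarrow> nat \<Rightarrow> 'a \<Rightarrow> real) \<Rightarrow> (nat \<Rightarrow> nat \<Rightarrow> 'a \<Rightarrow> real)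
    \<Rightarrow> (nat \<Rightarrow> nat \<Rightarrow> 'a \<Rightarrow> 'x) \<Rightarrow> (nat \<Rightarrow> nat \<Rightarrow> 'a \<Rightarrow> 'k) \<Rightarrow> nat \<Rightarrow> real \<Rightarrow> 'a \<Rightarrow> real" where
  "Ltil_plus M f u v X Y n t \<omega> = (\<Sum>l\<in>UNIV. Ltil M f u v X Y n l t \<omega>)"

end

theory Submission
  imports Defs
begin

(* Scaling time by n, the input of predicted class l is the primitive partial-sum process
   evaluated at the random fluid time A0(nt)/n = lam_n t + Atil_n(t)/sqrt n, which gives the
   exact identity  Ltil_l = Rtil_l(A0(nt)/n) + c_l Atil  with c_l = sum_k p_k q_kl / mu_k.
   The fluid time converges uniformly to lam t, and uniform convergence of Rtil_l to a
   continuous limit on compacts survives composition with it.  Summing over l, the identity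
   sum_l q_kl = 1 turns the Rtil_l into Vtil_0.  The expansions with o(sqrt n) remainders are
   the definitions of Ltil rearranged; they are exact for n > 0. *)

lemma LIMSEQ_of_sqrt_scaled_diff:
  fixes x :: "nat \<Rightarrow> real"
  assumes "(\<lambda>n. sqrt (real n) * (x n - a)) \<longlonglongrightarrow> 0"
  shows "x \<longlonglongrightarrow> a"
proof -
  have "\<forall>\<^sub>F n in sequentially. norm (x n - a) \<le> norm (sqrt (real n) * (x n - a))"
    using eventually_gt_at_top[of "0::nat"]
  proof eventually_elim
    case (elim n)
    then have "1 \<le> sqrt (real n)" by simp
    then show ?case by (simp add: abs_mult mult_right_mono[of 1 _ "\<bar>x n - a\<bar>", simplified])
  qed
  then have "(\<lambda>n. x n - a) \<longlonglongrightarrow> 0"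
    using assms by (rule Lim_null_comparison[OF _ tendsto_norm_zero])
  then show ?thesis by (simp add: LIM_zero_iff)
qed

lemma uniform_limit_of_tendsto:
  "(a \<longlongrightarrow> l) F \<Longrightarrow> uniform_limit S (\<lambda>n x. a n) (\<lambda>x. l) F"
  by (auto intro!: uniform_limitI dest: tendstoD)

lemma uniform_limit_compose_uniform_limit:
  fixes S :: "'n \<Rightarrow> 'a::metric_space \<Rightarrow> 'b::metric_space"
  assumes S: "uniform_limit K S Slim F" and Slim: "uniformly_continuous_on K Slim"
    and \<tau>: "uniform_limit I \<tau> \<tau>lim F" and in_K: "\<forall>\<^sub>F n in F. \<forall>t\<in>I. \<tau> n t \<in> K"
    and "closed K"
  shows "uniform_limit I (\<lambda>n t. S n (\<tau> n t)) (\<lambda>t. Slim (\<tau>lim t)) F"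
proof (rule uniform_limitI)
  fix e :: real assume "e > 0"
  have "uniform_limit I (\<lambda>n t. Slim (\<tau> n t)) (\<lambda>t. Slim (\<tau>lim t)) F"
    using \<tau> Slim in_K \<open>closed K\<close> by (rule uniform_limit_compose_uniformly_continuous_on)
  then have "\<forall>\<^sub>F n in F. \<forall>t\<in>I. dist (Slim (\<tau> n t)) (Slim (\<tau>lim t)) < e / 2"
    using \<open>e > 0\<close> by (intro uniform_limitD) simp_all
  moreover have "\<forall>\<^sub>F n in F. \<forall>x\<in>K. dist (S n x) (Slim x) < e / 2"
    using S \<open>e > 0\<close> by (intro uniform_limitD) simp_all
  ultimately show "\<forall>\<^sub>F n in F. \<forall>t\<in>I. dist (S n (\<tau> n t)) (Slim (\<tau>lim t)) < e"
    using in_K by eventually_elim (metis dist_commute dist_triangle_half_r)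
qed

lemma uniform_limit_fluid_time:
  fixes At :: "nat \<Rightarrow> real \<Rightarrow> real"
  assumes "lam_seq \<longlonglongrightarrow> lam" and "uniform_limit I At Alim sequentially"
    and "bounded (Alim ` I)" and "bounded I"
  shows "uniform_limit I (\<lambda>n t. lam_seq n * t + At n t / sqrt (real n)) (\<lambda>t. lam * t) sequentially"
proof -
  have "(\<lambda>n. inverse (sqrt (real n))) \<longlonglongrightarrow> 0"
    by (intro tendsto_inverse_0_at_top filterlim_compose[OF sqrt_at_top filterlim_real_sequentially])
  then have "uniform_limit I (\<lambda>n t. lam_seq n * t + At n t * inverse (sqrt (real n)))
      (\<lambda>t. lam * t + Alim t * 0) sequentially"
    using assms by (intro uniform_limit_add uniform_lim_mult uniform_limit_of_tendsto uniform_limit_const)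
      (auto simp: image_def)
  then show ?thesis by (simp add: divide_inverse)
qed

lemma uniform_limit_time_changed_process:
  fixes S At L :: "nat \<Rightarrow> real \<Rightarrow> real"
  assumes S: "\<And>T. uniform_limit {0..T} S Slim sequentially" and Slim: "continuous_on {0..} Slim"
    and At: "uniform_limit {0..1} At Alim sequentially" and Alim: "continuous_on {0..1} Alim"
    and lam_seq: "lam_seq \<longlonglongrightarrow> lam" and "0 \<le> lam" and c_seq: "c_seq \<longlonglongrightarrow> c"
    and nonneg: "\<And>n t. n > 0 \<Longrightarrow> t \<in> {0..1} \<Longrightarrow> 0 \<le> lam_seq n * t + At n t / sqrt (real n)"
    and L: "\<And>n t. n > 0 \<Longrightarrow> t \<in> {0..1} \<Longrightarrow>
      L n t = S n (lam_seq n * t + At n t / sqrt (real n)) + c_seq n * At n t"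
  shows "uniform_limit {0..1} L (\<lambda>t. Slim (lam * t) + c * Alim t) sequentially"
proof -
  let ?\<tau> = "\<lambda>n t. lam_seq n * t + At n t / sqrt (real n)"
  let ?K = "{0..lam + 1}"
  have Alim_bounded: "bounded (Alim ` {0..1})"
    by (intro compact_imp_bounded compact_continuous_image Alim) simp
  have \<tau>: "uniform_limit {0..1} ?\<tau> (\<lambda>t. lam * t) sequentially"
    by (rule uniform_limit_fluid_time[OF lam_seq At Alim_bounded]) simp
  have in_K: "\<forall>\<^sub>F n in sequentially. \<forall>t\<in>{0..1}. ?\<tau> n t \<in> ?K"
    using uniform_limitD[OF \<tau> zero_less_one] eventually_gt_at_top[of 0]
  proof eventually_elim
    case (elim n)
    have "?\<tau> n t \<in> ?K" if t: "t \<in> {0..1}" for t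
    proof -
      have "lam * t \<le> lam" using t \<open>0 \<le> lam\<close> by (simp add: mult_left_le)
      moreover have "\<bar>?\<tau> n t - lam * t\<bar> < 1" using elim(1) t by (simp add: dist_real_def)
      ultimately show ?thesis using nonneg[OF elim(2) t] by (simp add: abs_less_iff)
    qed
    then show ?case ..
  qed
  have Slim_uc: "uniformly_continuous_on ?K Slim"
    by (intro compact_uniformly_continuous continuous_on_subset[OF Slim]) auto
  have "uniform_limit {0..1} (\<lambda>n t. S n (?\<tau> n t)) (\<lambda>t. Slim (lam * t)) sequentially"
    using uniform_limit_compose_uniform_limit[OF S Slim_uc \<tau> in_K] by simp
  moreover have "uniform_limit {0..1} (\<lambda>n t. c_seq n * At n t) (\<lambda>t. c * Alim t) sequentially"
    using uniform_limit_of_tendsto[OF c_seq] At _ Alim_bounded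
    by (rule uniform_lim_mult) (simp add: image_constant_conv)
  ultimately have lim: "uniform_limit {0..1} (\<lambda>n t. S n (?\<tau> n t) + c_seq n * At n t)
      (\<lambda>t. Slim (lam * t) + c * Alim t) sequentially"
    by (rule uniform_limit_add)
  have "\<forall>\<^sub>F n in sequentially. \<forall>t\<in>{0..1}. S n (?\<tau> n t) + c_seq n * At n t = L n t"
    using eventually_gt_at_top[of 0] by eventually_elim (simp add: L)
  from uniform_limit_cong[OF this] lim show ?thesis by blast
qed

lemma fluid_time_eq:
  assumes "n > 0"
  shows "real n * (lam * t + ((real a - lam * real n * t) / sqrt (real n)) / sqrt (real n)) = real a"
proof -
  have "sqrt (real n) * sqrt (real n) = real n" by simp
  then show ?thesis using assms by (simp add: field_simps)
qed

lemma centred_sum_time_change: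
  fixes w :: "nat \<Rightarrow> real" and a n :: nat and lam c t :: real
  assumes "n > 0"
  defines "At \<equiv> (real a - lam * real n * t) / sqrt (real n)"
  shows "((\<Sum>i<a. w i) - lam * c * real n * t) / sqrt (real n)
    = ((\<Sum>i<nat \<lfloor>real n * (lam * t + At / sqrt (real n))\<rfloor>. w i)
        - c * real n * (lam * t + At / sqrt (real n))) / sqrt (real n)
      + c * At"
proof -
  have "real n * (lam * t + At / sqrt (real n)) = real a"
    unfolding At_def by (rule fluid_time_eq[OF assms(1)])
  moreover have "sqrt (real n) > 0" using assms by simp
  ultimately show ?thesis unfolding At_def by (simp add: field_simps)
qed

lemma fluid_time_nonneg:
  assumes "n > 0"
  shows "0 \<le> lam_n M u n * t + Atil M u n t \<omega> / sqrt (real n)"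
proof -
  have "real n * (lam_n M u n * t + Atil M u n t \<omega> / sqrt (real n)) \<ge> 0"
    unfolding Atil_def fluid_time_eq[OF assms] by simp
  then show ?thesis using assms by (simp add: zero_le_mult_iff)
qed

lemma Ltil_eq_Rtil_time_change:
  assumes "n > 0"
  shows "Ltil M f u v X Y n l t \<omega>
    = Rtil M f v X Y n l (lam_n M u n * t + Atil M u n t \<omega> / sqrt (real n)) \<omega>
      + (\<Sum>k\<in>UNIV. p_n M Y n k / mu_n M v Y n k * q_n M f X Y n k l) * Atil M u n t \<omega>"
  unfolding Ltil_def Rtil_def Atil_def Lhat_def by (rule centred_sum_time_change[OF assms])

lemma Lhat_plus_eq_sum_service: "Lhat_plus f u v X n s \<omega> = (\<Sum>i<A0 u n s \<omega>. v n i \<omega>)"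
  unfolding Lhat_plus_def Lhat_def by (subst sum.swap) simp

lemma p_n_mult_sum_q_n:
  fixes f :: "'x \<Rightarrow> 'k::finite"
  assumes "prob_space M"
    and "(\<lambda>\<omega>. f (X n 0 \<omega>)) \<in> M \<rightarrow>\<^sub>M count_space UNIV" and "Y n 0 \<in> M \<rightarrow>\<^sub>M count_space UNIV"
  shows "p_n M Y n k * (\<Sum>l\<in>UNIV. q_n M f X Y n k l) = p_n M Y n k"
proof -
  interpret prob_space M by fact
  let ?A = "\<lambda>l. {\<omega> \<in> space M. Y n 0 \<omega> = k \<and> f (X n 0 \<omega>) = l}"
  have "?A l \<in> sets M" for l
  proof -
    have "?A l = (Y n 0 -` {k} \<inter> space M) \<inter> ((\<lambda>\<omega>. f (X n 0 \<omega>)) -` {l} \<inter> space M)" by auto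
    then show ?thesis using measurable_sets[OF assms(3)] measurable_sets[OF assms(2)] by auto
  qed
  then have "(\<Sum>l\<in>UNIV. measure M (?A l)) = measure M (\<Union>l. ?A l)"
    by (intro finite_measure_finite_Union[symmetric]) (auto simp: disjoint_family_on_def)
  also have "(\<Union>l. ?A l) = {\<omega> \<in> space M. Y n 0 \<omega> = k}" by auto
  finally have "(\<Sum>l\<in>UNIV. measure M (?A l)) = p_n M Y n k" by (simp add: p_n_def)
  then have "p_n M Y n k \<noteq> 0 \<Longrightarrow> (\<Sum>l\<in>UNIV. q_n M f X Y n k l) = 1"
    by (simp add: q_n_def sum_divide_distrib[symmetric])
  then show ?thesis by (cases "p_n M Y n k = 0") simp_all
qed

lemma sum_load_rates:
  fixes f :: "'x \<Rightarrow> 'k::finite"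
  assumes "prob_space M"
    and "(\<lambda>\<omega>. f (X n 0 \<omega>)) \<in> M \<rightarrow>\<^sub>M count_space UNIV" and "Y n 0 \<in> M \<rightarrow>\<^sub>M count_space UNIV"
  shows "(\<Sum>l\<in>UNIV. \<Sum>k\<in>UNIV. p_n M Y n k / mu_n M v Y n k * q_n M f X Y n k l)
    = (\<Sum>k\<in>UNIV. p_n M Y n k / mu_n M v Y n k)"
proof -
  have "(\<Sum>l\<in>UNIV. \<Sum>k\<in>UNIV. p_n M Y n k / mu_n M v Y n k * q_n M f X Y n k l)
      = (\<Sum>k\<in>UNIV. p_n M Y n k / mu_n M v Y n k * (\<Sum>l\<in>UNIV. q_n M f X Y n k l))"
    by (subst sum.swap) (simp only: sum_distrib_left)
  also have "\<dots> = (\<Sum>k\<in>UNIV. p_n M Y n k / mu_n M v Y n k)"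
    by (simp add: p_n_mult_sum_q_n[where X = X and Y = Y and n = n, OF assms])
  finally show ?thesis .
qed

lemma Ltil_plus_eq:
  assumes "(\<Sum>l\<in>UNIV. \<Sum>k\<in>UNIV. p_n M Y n k / mu_n M v Y n k * q_n M f X Y n k l)
    = (\<Sum>k\<in>UNIV. p_n M Y n k / mu_n M v Y n k)"
  shows "Ltil_plus M f u v X Y n t \<omega>
    = (Lhat_plus f u v X n (real n * t) \<omega>
        - lam_n M u n * (\<Sum>k\<in>UNIV. p_n M Y n k / mu_n M v Y n k) * real n * t) / sqrt (real n)"
  unfolding Ltil_plus_def Ltil_def Lhat_plus_def assms[symmetric]
  by (simp add: sum_divide_distrib[symmetric] sum_subtractf sum_distrib_left sum_distrib_right)

lemma Ltil_plus_eq_V0til_time_change: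
  assumes "(\<Sum>l\<in>UNIV. \<Sum>k\<in>UNIV. p_n M Y n k / mu_n M v Y n k * q_n M f X Y n k l)
    = (\<Sum>k\<in>UNIV. p_n M Y n k / mu_n M v Y n k)"
    and "n > 0"
  shows "Ltil_plus M f u v X Y n t \<omega>
    = V0til M v Y n (lam_n M u n * t + Atil M u n t \<omega> / sqrt (real n)) \<omega>
      + (\<Sum>k\<in>UNIV. p_n M Y n k / mu_n M v Y n k) * Atil M u n t \<omega>"
  unfolding Ltil_plus_eq[OF assms(1)] Lhat_plus_eq_sum_service V0til_def Atil_def
  by (rule centred_sum_time_change[OF assms(2)])

lemma expansion_with_vanishing_remainder:
  fixes L D Lc :: "nat \<Rightarrow> real \<Rightarrow> real"
  assumes "\<And>n t. n > 0 \<Longrightarrow> t \<in> I \<Longrightarrow> Lc n t = (L n t - D n t) / sqrt (real n)"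
  shows "\<exists>r. (\<forall>\<epsilon>>0. eventually (\<lambda>n. \<forall>t\<in>I. \<bar>r n t\<bar> \<le> \<epsilon> * sqrt (real n)) sequentially)
    \<and> (\<forall>n. \<forall>t\<in>I. L n t = D n t + sqrt (real n) * Lc n t + r n t)"
proof (intro exI conjI allI impI ballI)
  let ?r = "\<lambda>n t. L n t - D n t - sqrt (real n) * Lc n t"
  fix \<epsilon> :: real assume "\<epsilon> > 0"
  show "eventually (\<lambda>n. \<forall>t\<in>I. \<bar>?r n t\<bar> \<le> \<epsilon> * sqrt (real n)) sequentially"
    using eventually_gt_at_top[of 0] by eventually_elim (simp add: assms less_imp_le[OF \<open>\<epsilon> > 0\<close>])
qed simp

lemma Ltil_uniform_limit:
  assumes A: "\<And>T. uniform_limit {0..T} (\<lambda>n t. Atil M u n t \<omega>) Alim sequentially"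
    and Alim: "continuous_on {0..} Alim"
    and R: "\<And>T. uniform_limit {0..T} (\<lambda>n t. Rtil M f v X Y n l t \<omega>) Rlim sequentially"
    and Rlim: "continuous_on {0..} Rlim"
    and "lam_n M u \<longlonglongrightarrow> lam" and "0 \<le> lam"
    and "(\<lambda>n. \<Sum>k\<in>UNIV. p_n M Y n k / mu_n M v Y n k * q_n M f X Y n k l) \<longlonglongrightarrow> c"
  shows "uniform_limit {0..1} (\<lambda>n t. Ltil M f u v X Y n l t \<omega>)
    (\<lambda>t. Rlim (lam * t) + c * Alim t) sequentially"
proof (rule uniform_limit_time_changed_process[OF R Rlim A])
  show "continuous_on {0..1} Alim" using Alim by (rule continuous_on_subset) auto
qed (use assms in \<open>simp_all add: Ltil_eq_Rtil_time_change fluid_time_nonneg\<close>)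

lemma Ltil_plus_uniform_limit:
  assumes A: "\<And>T. uniform_limit {0..T} (\<lambda>n t. Atil M u n t \<omega>) Alim sequentially"
    and Alim: "continuous_on {0..} Alim"
    and V: "\<And>T. uniform_limit {0..T} (\<lambda>n t. V0til M v Y n t \<omega>) Vlim sequentially"
    and Vlim: "continuous_on {0..} Vlim"
    and "lam_n M u \<longlonglongrightarrow> lam" and "0 \<le> lam"
    and "(\<lambda>n. \<Sum>k\<in>UNIV. p_n M Y n k / mu_n M v Y n k) \<longlonglongrightarrow> c"
    and "\<And>n. (\<Sum>l\<in>UNIV. \<Sum>k\<in>UNIV. p_n M Y n k / mu_n M v Y n k * q_n M f X Y n k l)
      = (\<Sum>k\<in>UNIV. p_n M Y n k / mu_n M v Y n k)"
  shows "uniform_limit {0..1} (\<lambda>n t. Ltil_plus M f u v X Y n t \<omega>)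
    (\<lambda>t. Vlim (lam * t) + c * Alim t) sequentially"
proof (rule uniform_limit_time_changed_process[OF V Vlim A])
  show "continuous_on {0..1} Alim" using Alim by (rule continuous_on_subset) auto
qed (use assms in \<open>simp_all add: Ltil_plus_eq_V0til_time_change fluid_time_nonneg\<close>)

theorem mainTheorem5:
  fixes M :: "'a measure"
    and f :: "real ^ 'd \<Rightarrow> 'k::finite"
    and u v :: "nat \<Rightarrow> nat \<Rightarrow> 'a \<Rightarrow> real"
    and X :: "nat \<Rightarrow> nat \<Rightarrow> 'a \<Rightarrow> real ^ 'd"
    and Y :: "nat \<Rightarrow> nat \<Rightarrow> 'a \<Rightarrow> 'k"
    and lam :: real and p mu :: "'k \<Rightarrow> real" and q :: "'k \<Rightarrow> 'k \<Rightarrow> real"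
    and g_u g_v :: "real \<Rightarrow> real" and alpha_u :: real and alpha_v :: "'k \<Rightarrow> real"
    and A0lim V0lim :: "real \<Rightarrow> 'a \<Rightarrow> real" and Rlim :: "'k \<Rightarrow> real \<Rightarrow> 'a \<Rightarrow> real"
  assumes M: "prob_space M"
    and f_meas: "f \<in> borel \<rightarrow>\<^sub>M count_space UNIV"
    \<comment> \<open>basic measurability and sign conditions\<close>
    and u_meas: "\<And>n i. u n i \<in> borel_measurable M"
    and v_meas: "\<And>n i. v n i \<in> borel_measurable M"
    and X_meas: "\<And>n i. X n i \<in> borel_measurable M"
    and Y_meas: "\<And>n i. Y n i \<in> M \<rightarrow>\<^sub>M count_space UNIV"
    and u_nonneg: "\<And>n i \<omega>. \<omega> \<in> space M \<Longrightarrow> u n i \<omega> \<ge> 0"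
    and v_pos: "\<And>n i \<omega>. \<omega> \<in> space M \<Longrightarrow> v n i \<omega> > 0"
    \<comment> \<open>(DGP)\<close>
    and iid_indep: "\<And>n. prob_space.indep_vars M
        (\<lambda>_. (borel :: real measure) \<Otimes>\<^sub>M (borel :: real measure) \<Otimes>\<^sub>M (borel :: (real ^ 'd) measure)
              \<Otimes>\<^sub>M (count_space UNIV :: 'k measure))
        (\<lambda>i \<omega>. (u n i \<omega>, v n i \<omega>, X n i \<omega>, Y n i \<omega>)) UNIV"
    and iid_ident: "\<And>n i. distr M
        ((borel :: real measure) \<Otimes>\<^sub>M (borel :: real measure) \<Otimes>\<^sub>M (borel :: (real ^ 'd) measure)
              \<Otimes>\<^sub>M (count_space UNIV :: 'k measure))
        (\<lambda>\<omega>. (u n i \<omega>, v n i \<omega>, X n i \<omega>, Y n i \<omega>))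
      = distr M
        ((borel :: real measure) \<Otimes>\<^sub>M (borel :: real measure) \<Otimes>\<^sub>M (borel :: (real ^ 'd) measure)
              \<Otimes>\<^sub>M (count_space UNIV :: 'k measure))
        (\<lambda>\<omega>. (u n 0 \<omega>, v n 0 \<omega>, X n 0 \<omega>, Y n 0 \<omega>))"
    and u_indep: "\<And>n A B. A \<in> sets (Pi\<^sub>M UNIV (\<lambda>_. (borel :: real measure))) \<Longrightarrow>
        B \<in> sets (Pi\<^sub>M UNIV (\<lambda>_. (borel :: real measure) \<Otimes>\<^sub>M (borel :: (real ^ 'd) measure)
              \<Otimes>\<^sub>M (count_space UNIV :: 'k measure))) \<Longrightarrow>
        measure M {\<omega> \<in> space M. (\<lambda>i. u n i \<omega>) \<in> A \<and> (\<lambda>i. (v n i \<omega>, X n i \<omega>, Y n i \<omega>)) \<in> B}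
        = measure M {\<omega> \<in> space M. (\<lambda>i. u n i \<omega>) \<in> A}
          * measure M {\<omega> \<in> space M. (\<lambda>i. (v n i \<omega>, X n i \<omega>, Y n i \<omega>)) \<in> B}"
    and cond_indep: "\<And>n i k B C. B \<in> sets (borel :: real measure) \<Longrightarrow> C \<in> sets (borel :: (real ^ 'd) measure) \<Longrightarrow>
        measure M {\<omega> \<in> space M. v n i \<omega> \<in> B \<and> X n i \<omega> \<in> C \<and> Y n i \<omega> = k}
          * measure M {\<omega> \<in> space M. Y n i \<omega> = k}
        = measure M {\<omega> \<in> space M. v n i \<omega> \<in> B \<and> Y n i \<omega> = k}
          * measure M {\<omega> \<in> space M. X n i \<omega> \<in> C \<and> Y n i \<omega> = k}"
    \<comment> \<open>(HT)\<close>
    and p_range: "\<And>k. 0 \<le> p k \<and> p k \<le> 1"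
    and q_range: "\<And>k l. 0 \<le> q k l \<and> q k l \<le> 1"
    and lam_pos: "lam > 0"
    and mu_pos: "\<And>k. mu k > 0"
    and pq_pos: "\<And>l. (\<Sum>k\<in>UNIV. p k * q k l) > 0"
    and heavy: "lam * (\<Sum>k\<in>UNIV. p k / mu k) = 1"
    and lam_conv: "(\<lambda>n. sqrt (real n) * (lam_n M u n - lam)) \<longlonglongrightarrow> 0"
    and mu_conv: "\<And>k. (\<lambda>n. sqrt (real n) * (mu_n M v Y n k - mu k)) \<longlonglongrightarrow> 0"
    and p_conv: "\<And>k. (\<lambda>n. sqrt (real n) * (p_n M Y n k - p k)) \<longlonglongrightarrow> 0"
    and q_conv: "\<And>k l. (\<lambda>n. sqrt (real n) * (q_n M f X Y n k l - q k l)) \<longlonglongrightarrow> 0"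
    \<comment> \<open>(UI)\<close>
    and u_sq: "\<And>n. integrable M (\<lambda>\<omega>. (u n 0 \<omega>)\<^sup>2)"
    and v_sq: "\<And>n. integrable M (\<lambda>\<omega>. (v n 0 \<omega>)\<^sup>2)"
    and X_sq: "\<And>n. integrable M (\<lambda>\<omega>. (norm (X n 0 \<omega>))\<^sup>2)"
    and u_ui: "\<And>n x. integral\<^sup>L M (\<lambda>\<omega>. (u n 0 \<omega>)\<^sup>2 * indicator {\<omega>. u n 0 \<omega> > x} \<omega>) \<le> g_u x"
    and v_ui: "\<And>n x. integral\<^sup>L M (\<lambda>\<omega>. (v n 0 \<omega>)\<^sup>2 * indicator {\<omega>. v n 0 \<omega> > x} \<omega>) \<le> g_v x"
    and g_u_lim: "(g_u \<longlongrightarrow> 0) at_top"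
    and g_v_lim: "(g_v \<longlongrightarrow> 0) at_top"
    and u_2nd: "(\<lambda>n. integral\<^sup>L M (\<lambda>\<omega>. (u n 0 \<omega>)\<^sup>2)) \<longlonglongrightarrow> alpha_u"
    and alpha_u_pos: "0 < alpha_u"
    and v_2nd: "\<And>k. (\<lambda>n. integral\<^sup>L M (\<lambda>\<omega>. (v n 0 \<omega>)\<^sup>2 * indicator {\<omega>. Y n 0 \<omega> = k} \<omega>)
                         / p_n M Y n k) \<longlonglongrightarrow> alpha_v k"
    and alpha_v_pos: "\<And>k. 0 < alpha_v k"
    \<comment> \<open>a.s. uniform convergence of the primitive processes (Skorokhod realization)
        to limits with continuous sample paths\<close>
    and prim_conv: "AE \<omega> in M.
        (\<forall>T. uniform_limit {0..T} (\<lambda>n t. Atil M u n t \<omega>) (\<lambda>t. A0lim t \<omega>) sequentially)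
      \<and> (\<forall>T. uniform_limit {0..T} (\<lambda>n t. V0til M v Y n t \<omega>) (\<lambda>t. V0lim t \<omega>) sequentially)
      \<and> (\<forall>l T. uniform_limit {0..T} (\<lambda>n t. Rtil M f v X Y n l t \<omega>) (\<lambda>t. Rlim l t \<omega>) sequentially)
      \<and> continuous_on {0..} (\<lambda>t. A0lim t \<omega>)
      \<and> continuous_on {0..} (\<lambda>t. V0lim t \<omega>)
      \<and> (\<forall>l. continuous_on {0..} (\<lambda>t. Rlim l t \<omega>))"
  shows
    "(AE \<omega> in M.
        (\<forall>l. uniform_limit {0..1} (\<lambda>n t. Ltil M f u v X Y n l t \<omega>)
              (\<lambda>t. Rlim l (lam * t) \<omega> + (\<Sum>k\<in>UNIV. p k / mu k * q k l) * A0lim t \<omega>) sequentially)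
      \<and> uniform_limit {0..1} (\<lambda>n t. Ltil_plus M f u v X Y n t \<omega>)
              (\<lambda>t. V0lim (lam * t) \<omega> + (\<Sum>k\<in>UNIV. p k / mu k) * A0lim t \<omega>) sequentially)
   \<and> (\<forall>\<omega>\<in>space M.
        (\<forall>l. \<exists>r :: nat \<Rightarrow> real \<Rightarrow> real.
           (\<forall>\<epsilon>>0. eventually (\<lambda>n. \<forall>t\<in>{0..1}. \<bar>r n t\<bar> \<le> \<epsilon> * sqrt (real n)) sequentially)
         \<and> (\<forall>n. \<forall>t\<in>{0..1}. Lhat f u v X n l (real n * t) \<omega>
               = lam_n M u n * (\<Sum>k\<in>UNIV. p_n M Y n k / mu_n M v Y n k * q_n M f X Y n k l) * (real n * t)
                 + sqrt (real n) * Ltil M f u v X Y n l t \<omega> + r n t))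
      \<and> (\<exists>r :: nat \<Rightarrow> real \<Rightarrow> real.
           (\<forall>\<epsilon>>0. eventually (\<lambda>n. \<forall>t\<in>{0..1}. \<bar>r n t\<bar> \<le> \<epsilon> * sqrt (real n)) sequentially)
         \<and> (\<forall>n. \<forall>t\<in>{0..1}. Lhat_plus f u v X n (real n * t) \<omega>
               = lam_n M u n * (\<Sum>k\<in>UNIV. p_n M Y n k / mu_n M v Y n k) * (real n * t)
                 + sqrt (real n) * Ltil_plus M f u v X Y n t \<omega> + r n t)))"
proof -
  have loads: "(\<Sum>l\<in>UNIV. \<Sum>k\<in>UNIV. p_n M Y n k / mu_n M v Y n k * q_n M f X Y n k l)
      = (\<Sum>k\<in>UNIV. p_n M Y n k / mu_n M v Y n k)" for n
    using M measurable_compose[OF X_meas f_meas] Y_meas by (rule sum_load_rates)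
  have lam_lim: "lam_n M u \<longlonglongrightarrow> lam"
    by (rule LIMSEQ_of_sqrt_scaled_diff[OF lam_conv])
  have p_lim: "(\<lambda>n. p_n M Y n k) \<longlonglongrightarrow> p k" for k
    by (rule LIMSEQ_of_sqrt_scaled_diff[OF p_conv])
  have q_lim: "(\<lambda>n. q_n M f X Y n k l) \<longlonglongrightarrow> q k l" for k l
    by (rule LIMSEQ_of_sqrt_scaled_diff[OF q_conv])
  have mu_lim: "(\<lambda>n. mu_n M v Y n k) \<longlonglongrightarrow> mu k" for k
    by (rule LIMSEQ_of_sqrt_scaled_diff[OF mu_conv])
  have mu_ne: "mu k \<noteq> 0" for k
    using mu_pos[of k] by simp
  have load_l_lim: "(\<lambda>n. \<Sum>k\<in>UNIV. p_n M Y n k / mu_n M v Y n k * q_n M f X Y n k l)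
      \<longlonglongrightarrow> (\<Sum>k\<in>UNIV. p k / mu k * q k l)" for l
    by (intro tendsto_sum tendsto_mult tendsto_divide p_lim q_lim mu_lim mu_ne)
  have load_lim: "(\<lambda>n. \<Sum>k\<in>UNIV. p_n M Y n k / mu_n M v Y n k) \<longlonglongrightarrow> (\<Sum>k\<in>UNIV. p k / mu k)"
    by (intro tendsto_sum tendsto_divide p_lim mu_lim mu_ne)
  show ?thesis
    apply (intro conjI ballI allI eventually_mono[OF prim_conv] expansion_with_vanishing_remainder;
        (elim conjE)?)
    subgoal using lam_lim lam_pos load_l_lim by (intro Ltil_uniform_limit) auto
    subgoal using lam_lim lam_pos load_lim loads by (intro Ltil_plus_uniform_limit) auto
    subgoal by (simp add: Ltil_def mult.assoc)
    subgoal by (simp add: Ltil_plus_eq[OF loads] mult.assoc)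
    done
qed

end
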